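(* Let $f_A(x)=1-\dfrac{1}{\sum_{n\ge0}n!\,x^n}$. For all $n\ge1$ and $k\ge0$, the number of permutations $w\in\mathfrak S_n$ with $|C(w)|=k$ equals the coefficient of $x^nt^k$ in $\dfrac{f_A(x)}{1-t\,f_A(x)}$.
   Context: $\mathfrak S_n$ is the Coxeter group with generators $\tau_i=(i,i+1)$, $1\le i\le n-1$. For $w\in\mathfrak S_n$, $C(w)$ is the set of $\tau_i$ that do not appear in a (any) reduced expression of $w$; equivalently $C(w)=\{\tau_i: w(j)<w(k)\text{ for all }1\le j\le i<k\le n\}$. Generating functions are formal power series. *)

theory Defs
  imports "HOL-Combinatorics.Permutations" "HOL-Computational_Algebra.Formal_Power_Series"
begin

text \<open>The set C(w) for w in S_n (permutation of {1..n}); the generator tau_i = (i,i+1)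
  is identified with its index i.\<close>
definition Cset :: "nat \<Rightarrow> (nat \<Rightarrow> nat) \<Rightarrow> nat set" where
  "Cset n w = {i \<in> {1..n-1}. \<forall>j k. 1 \<le> j \<and> j \<le> i \<and> i < k \<and> k \<le> n \<longrightarrow> w j < w k}"

definition fA :: "rat fps" where
  "fA = 1 - inverse (Abs_fps (\<lambda>n. of_nat (fact n)))"

text \<open>The bivariate series f_A(x) / (1 - t f_A(x)), represented as a power series in t
  whose coefficients are power series in x; the coefficient of x^n t^k is (GA $ k) $ n.\<close>
definition GA :: "rat fps fps" where
  "GA = fps_const fA * inverse (1 - fps_X * fps_const fA)"

end

theory Submission
  imports Defs
begin

(* Write u (+) v for the permutation of {1..i+m} that acts as u on {1..i} and as v, shifted by i,
   on {i+1..i+m}. For a permutation w of {1..n}, i lies in C(w) exactly when w maps {1..i} into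
   itself. Hence w factors uniquely as u (+) v, where i is the least element of C(w) or i = n if
   C(w) is empty, and u is indecomposable (C(u) is empty); moreover C(u (+) v) consists of i + C(v)
   together with i itself unless v is empty. If D(x) is the generating function of indecomposable
   permutations, counting all permutations gives sum n! x^n = 1/(1 - D), i.e. D = f_A, and
   iterating the factorisation shows that the permutations w with |C(w)| = k are counted by the
   coefficient of x^n in D^(k+1), which is the coefficient of x^n t^k in D/(1 - t D). *)

unbundle fps_syntax

definition perm_shift :: "nat \<Rightarrow> (nat \<Rightarrow> nat) \<Rightarrow> nat \<Rightarrow> nat" where
  "perm_shift i v = (\<lambda>j. if j \<le> i then j else v (j - i) + i)"

definition perm_sum :: "nat \<Rightarrow> (nat \<Rightarrow> nat) \<Rightarrow> (nat \<Rightarrow> nat) \<Rightarrow> nat \<Rightarrow> nat" where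
  "perm_sum i u v = (\<lambda>j. if j \<le> i then u j else v (j - i) + i)"

lemma bij_betw_add_atLeastAtMost: "bij_betw ((+) i) {1..m} {i+1..i+(m::nat)}"
  by (rule bij_betwI[where g = "\<lambda>j. j - i"]) auto

lemma perm_shift_eq_map_permutation:
  assumes "v permutes {1..m}"
  shows "perm_shift i v = map_permutation {1..m} ((+) i) v"
proof
  fix j
  have inj: "inj_on ((+) i) {1..m}" by simp
  show "perm_shift i v j = map_permutation {1..m} ((+) i) v j"
  proof (cases "j \<in> {i+1..i+m}")
    case True
    then have "j = i + (j - i)" "j - i \<in> {1..m}" by auto
    then show ?thesis
      using map_permutation_apply[OF inj, of "j - i" v] True by (simp add: perm_shift_def)
  next
    case False
    then have "map_permutation {1..m} ((+) i) v j = j"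
      using bij_betw_add_atLeastAtMost[of i m]
      by (simp add: map_permutation_def bij_betw_def del: image_add_atLeastAtMost)
    moreover have "v (j - i) = j - i" if "\<not> j \<le> i"
    proof -
      have "j - i \<notin> {1..m}" using that False by auto
      then show ?thesis by (rule permutes_not_in[OF assms])
    qed
    ultimately show ?thesis using False by (auto simp: perm_shift_def)
  qed
qed

lemma permutes_perm_shift:
  assumes "v permutes {1..m}"
  shows "perm_shift i v permutes {i+1..i+m}"
  unfolding perm_shift_eq_map_permutation[OF assms]
  by (rule map_permutation_permutes[OF bij_betw_add_atLeastAtMost assms])

lemma permutes_imp_perm_shift:
  assumes "p permutes {i+1..i+m}"
  obtains v where "v permutes {1..m}" "p = perm_shift i v"
proof
  define v where "v = map_permutation {i+1..i+m} (\<lambda>j. j - i) p"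
  have bij: "bij_betw (\<lambda>j. j - i) {i+1..i+m} {1..m}"
    by (rule bij_betwI[where g = "(+) i"]) auto
  show v: "v permutes {1..m}"
    unfolding v_def by (rule map_permutation_permutes[OF bij assms])
  have "map_permutation {1..m} ((+) i) v = p"
    unfolding v_def by (rule map_permutation_compose_inv[OF bij assms]) auto
  then show "p = perm_shift i v"
    by (simp add: perm_shift_eq_map_permutation[OF v])
qed

lemma perm_sum_eq_comp:
  assumes "u permutes {1..i}"
  shows "perm_sum i u v = perm_shift i v \<circ> u"
proof
  fix j
  show "perm_sum i u v j = (perm_shift i v \<circ> u) j"
  proof (cases "j \<in> {1..i}")
    case True
    then have "u j \<in> {1..i}" using permutes_in_image[OF assms] by auto
    with True show ?thesis by (auto simp: perm_sum_def perm_shift_def)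
  next
    case False
    with permutes_not_in[OF assms] show ?thesis by (auto simp: perm_sum_def perm_shift_def)
  qed
qed

lemma permutes_perm_sum:
  assumes "u permutes {1..i}" and "v permutes {1..m}"
  shows "perm_sum i u v permutes {1..i+m}"
proof -
  have "u permutes {1..i+m}" by (rule permutes_subset[OF assms(1)]) auto
  moreover have "perm_shift i v permutes {1..i+m}"
    by (rule permutes_subset[OF permutes_perm_shift[OF assms(2)]]) auto
  ultimately show ?thesis
    unfolding perm_sum_eq_comp[OF assms(1)] by (rule permutes_compose)
qed

lemma perm_sum_inject:
  assumes "u permutes {1..i}" "u' permutes {1..i}" "v permutes {1..m}" "v' permutes {1..m}"
  shows "perm_sum i u v = perm_sum i u' v' \<longleftrightarrow> u = u' \<and> v = v'"
proof
  assume eq: "perm_sum i u v = perm_sum i u' v'"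
  have "u j = u' j" for j
    using fun_cong[OF eq, of j] permutes_not_in[OF assms(1), of j] permutes_not_in[OF assms(2), of j]
    by (cases "j \<le> i") (auto simp: perm_sum_def)
  moreover have "v j = v' j" for j
    using fun_cong[OF eq, of "j + i"] permutes_not_in[OF assms(3), of j] permutes_not_in[OF assms(4), of j]
    by (cases "j = 0") (auto simp: perm_sum_def)
  ultimately show "u = u' \<and> v = v'" by auto
qed simp

lemma Cset_subset: "Cset n w \<subseteq> {1..n-1}"
  by (auto simp: Cset_def)

lemma finite_Cset [simp]: "finite (Cset n w)"
  using finite_subset[OF Cset_subset] by blast

lemma Cset_0 [simp]: "Cset 0 w = {}"
  by (simp add: Cset_def)

lemma permutes_image_initial_segment:
  fixes w :: "nat \<Rightarrow> nat"
  assumes w: "w permutes {1..n}" and le: "\<forall>j\<in>{1..i}. w j \<le> i"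
  shows "w ` {1..i} = {1..i}"
proof (rule endo_inj_surj)
  have "w j \<noteq> 0" if "j \<noteq> 0" for j
    using permutes_not_in[OF w, of 0] permutes_inj[OF w] that
    by (metis atLeastAtMost_iff injD le_zero_eq not_one_le_zero)
  with le show "w ` {1..i} \<subseteq> {1..i}" by (auto simp: Suc_le_eq)
  show "inj_on w {1..i}"
    using permutes_inj_on[OF w] .
qed simp

lemma Cset_permutes_eq:
  fixes w :: "nat \<Rightarrow> nat"
  assumes w: "w permutes {1..n}"
  shows "Cset n w = {i \<in> {1..n-1}. \<forall>j\<in>{1..i}. w j \<le> i}"
proof -
  have inj: "inj_on w A" for A
    using permutes_inj_on[OF w] .
  have into: "w j \<in> {1..n}" if "j \<in> {1..n}" for j
    using permutes_in_image[OF w] that by simp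
  have "w j \<le> i" if i: "i \<in> Cset n w" and j: "j \<in> {1..i}" for i j
  proof (rule ccontr)
    assume "\<not> w j \<le> i"
    have "i \<le> n" and lt: "\<And>k. i < k \<Longrightarrow> k \<le> n \<Longrightarrow> w j < w k"
      using i j by (auto simp: Cset_def)
    then have "w ` {i+1..n} \<subseteq> {w j + 1..n}"
      using into by (auto simp: Suc_le_eq)
    then have "card (w ` {i+1..n}) \<le> n - w j"
      by (metis card_atLeastAtMost card_mono diff_Suc_Suc finite_atLeastAtMost Suc_eq_plus1)
    moreover have "card (w ` {i+1..n}) = n - i"
      by (simp add: card_image[OF inj])
    ultimately show False
      using \<open>\<not> w j \<le> i\<close> into[of j] j \<open>i \<le> n\<close> by auto
  qed
  moreover have "i \<in> Cset n w" if i: "i \<in> {1..n-1}" and le: "\<forall>j\<in>{1..i}. w j \<le> i" for i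
  proof -
    have initial: "w ` {1..i} = {1..i}"
      by (rule permutes_image_initial_segment[OF w le])
    have "w j < w k" if "1 \<le> j" "j \<le> i" "i < k" "k \<le> n" for j k
    proof -
      have "w k \<notin> w ` {1..i}"
        using that inj_onD[OF inj[of "{1..n}"]] by fastforce
      then have "i < w k" using initial into[of k] that by auto
      moreover have "w j \<le> i" using le that by simp
      ultimately show ?thesis by simp
    qed
    with i show ?thesis by (auto simp: Cset_def)
  qed
  ultimately show ?thesis
    using Cset_subset[of n w] by blast
qed

lemma perm_sum_bounded_iff:
  assumes u: "u permutes {1..i}" and "i < x"
  shows "(\<forall>j\<in>{1..x}. perm_sum i u v j \<le> x) \<longleftrightarrow> (\<forall>j\<in>{1..x-i}. v j \<le> x - i)"
proof
  assume *: "\<forall>j\<in>{1..x}. perm_sum i u v j \<le> x"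
  show "\<forall>j\<in>{1..x-i}. v j \<le> x - i"
  proof
    fix j assume j: "j \<in> {1..x-i}"
    then have "perm_sum i u v (j + i) \<le> x" using * \<open>i < x\<close> by auto
    with j show "v j \<le> x - i" by (simp add: perm_sum_def)
  qed
next
  assume *: "\<forall>j\<in>{1..x-i}. v j \<le> x - i"
  show "\<forall>j\<in>{1..x}. perm_sum i u v j \<le> x"
  proof
    fix j assume j: "j \<in> {1..x}"
    show "perm_sum i u v j \<le> x"
    proof (cases "j \<le> i")
      case True
      then show ?thesis
        using permutes_in_image[OF u, of j] j \<open>i < x\<close> by (simp add: perm_sum_def)
    next
      case False
      then have "j - i \<in> {1..x-i}" using j by auto
      then have "v (j - i) \<le> x - i" using * by blast
      with False \<open>i < x\<close> show ?thesis by (simp add: perm_sum_def)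
    qed
  qed
qed

lemma Cset_perm_sum:
  assumes u: "u permutes {1..i}" and v: "v permutes {1..m}"
  shows "Cset (i+m) (perm_sum i u v) = Cset i u \<union> ({i} \<inter> {1..i+m-1}) \<union> (+) i ` Cset m v"
proof -
  have u_le: "u j \<le> i" if "j \<in> {1..i}" for j
    using permutes_in_image[OF u, of j] that by simp
  have below: "(\<forall>j\<in>{1..x}. perm_sum i u v j \<le> x) \<longleftrightarrow> (\<forall>j\<in>{1..x}. u j \<le> x)" if "x < i" for x
    using that by (auto simp: perm_sum_def)
  have upto_i: "\<forall>j\<in>{1..i}. perm_sum i u v j \<le> i"
    using u_le by (simp add: perm_sum_def)
  have shifted: "x \<in> (+) i ` A \<longleftrightarrow> i < x \<and> x - i \<in> A" if "0 \<notin> A" for x A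
    using that by (auto simp: image_iff intro: gr0I intro!: bexI[of _ "x - i"])
  note Cset_eqs = Cset_permutes_eq[OF permutes_perm_sum[OF u v]] Cset_permutes_eq[OF u] Cset_permutes_eq[OF v]
  show ?thesis
  proof (rule set_eqI)
    fix x
    consider (below_i) "x < i" | (at_i) "x = i" | (above_i) "i < x" by linarith
    then show "x \<in> Cset (i+m) (perm_sum i u v) \<longleftrightarrow> x \<in> Cset i u \<union> ({i} \<inter> {1..i+m-1}) \<union> (+) i ` Cset m v"
    proof cases
      case below_i
      then show ?thesis using below[OF below_i] by (auto simp: Cset_eqs shifted)
    next
      case at_i
      then show ?thesis using upto_i by (auto simp: Cset_eqs shifted)
    next
      case above_i
      then show ?thesis using perm_sum_bounded_iff[OF u above_i] by (auto simp: Cset_eqs shifted)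
    qed
  qed
qed

lemma perm_sum_decompose:
  assumes w: "w permutes {1..n}" and "i \<le> n" and le: "\<forall>j\<in>{1..i}. w j \<le> i"
  obtains u v where "u permutes {1..i}" "v permutes {1..n-i}" "w = perm_sum i u v"
proof -
  have inj: "inj_on w A" for A
    using permutes_inj_on[OF w] .
  have initial: "w ` {1..i} = {1..i}"
    using permutes_image_initial_segment[OF w le] .
  have "w ` {i+1..n} = w ` ({1..n} - {1..i})"
    by (intro arg_cong[where f = "image w"]) auto
  also have "\<dots> = {i+1..n}"
    using image_set_diff[OF permutes_inj[OF w]] permutes_image[OF w] initial by auto
  finally have final: "w ` {i+1..n} = {i+1..n}" .
  define u where "u = restrict_id w {1..i}"
  define p where "p = restrict_id w {i+1..n}"
  have u: "u permutes {1..i}"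
    unfolding u_def by (rule permutes_restrict_id) (use inj initial in \<open>auto simp: bij_betw_def\<close>)
  have "p permutes {i+1..n}"
    unfolding p_def by (rule permutes_restrict_id) (use inj final in \<open>auto simp: bij_betw_def\<close>)
  then have "p permutes {i+1..i+(n-i)}"
    using \<open>i \<le> n\<close> by simp
  then obtain v where v: "v permutes {1..n-i}" and p: "p = perm_shift i v"
    by (rule permutes_imp_perm_shift)
  have "w = p \<circ> u"
  proof
    fix j
    consider "j \<in> {1..i}" | "j \<in> {i+1..n}" | "j \<notin> {1..n}"
      using \<open>i \<le> n\<close> by fastforce
    then show "w j = (p \<circ> u) j"
    proof cases
      case 1
      then have "w j \<in> {1..i}" using initial by blast
      with 1 show ?thesis by (simp add: u_def p_def)
    qed (use permutes_not_in[OF w, of j] \<open>i \<le> n\<close> in \<open>auto simp: u_def p_def\<close>)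
  qed
  with u v p show ?thesis
    using that perm_sum_eq_comp[OF u] by simp
qed

(* The empty permutation is not indecomposable, so the generating function below has
   constant term 0. *)
definition indecomposable_perms :: "nat \<Rightarrow> (nat \<Rightarrow> nat) set" where
  "indecomposable_perms n = {u. u permutes {1..n} \<and> 0 < n \<and> Cset n u = {}}"

lemma finite_indecomposable_perms: "finite (indecomposable_perms n)"
  by (rule finite_subset[OF _ finite_permutations[of "{1..n}"]]) (auto simp: indecomposable_perms_def)

lemma Cset_perm_sum_indecomposable:
  assumes u: "u \<in> indecomposable_perms i" and v: "v permutes {1..m}"
  shows "Cset (i+m) (perm_sum i u v) = {i} \<inter> {..<i+m} \<union> (+) i ` Cset m v"
  using Cset_perm_sum[OF _ v, of u] u by (auto simp: indecomposable_perms_def)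

lemma card_Cset_perm_sum_indecomposable:
  assumes u: "u \<in> indecomposable_perms i" and v: "v permutes {1..m}"
  shows "card (Cset (i+m) (perm_sum i u v)) = of_bool (0 < m) + card (Cset m v)"
proof -
  have "i \<notin> (+) i ` Cset m v"
    using Cset_subset[of m v] by auto
  moreover have "card ((+) i ` Cset m v) = card (Cset m v)"
    by (simp add: card_image)
  ultimately show ?thesis
    unfolding Cset_perm_sum_indecomposable[OF u v] by (cases "0 < m") auto
qed

lemma Min_Cset_perm_sum_indecomposable:
  assumes u: "u \<in> indecomposable_perms i" and v: "v permutes {1..m}"
  shows "Min (insert (i+m) (Cset (i+m) (perm_sum i u v))) = i"
proof (rule Min_eqI)
  show "finite (insert (i+m) (Cset (i+m) (perm_sum i u v)))"
    by simp
  show "i \<le> x" if "x \<in> insert (i+m) (Cset (i+m) (perm_sum i u v))" for x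
    using that unfolding Cset_perm_sum_indecomposable[OF u v] by auto
  show "i \<in> insert (i+m) (Cset (i+m) (perm_sum i u v))"
    unfolding Cset_perm_sum_indecomposable[OF u v] by (cases "m = 0") auto
qed

lemma perm_sum_decompose_indecomposable:
  assumes w: "w permutes {1..n}" and "0 < n"
  obtains i u v where "i \<in> {1..n}" "u \<in> indecomposable_perms i" "v permutes {1..n-i}"
    "w = perm_sum i u v"
proof -
  define i where "i = Min (insert n (Cset n w))"
  have fin: "finite (insert n (Cset n w))"
    by simp
  have i_in: "i \<in> insert n (Cset n w)"
    unfolding i_def using fin by (rule Min_in) simp
  have i_min: "i \<le> x" if "x \<in> Cset n w" for x
    unfolding i_def using fin that by simp
  have i: "i \<in> {1..n}"
  proof -
    have "x \<in> {1..n}" if "x \<in> Cset n w" for x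
      using that by (auto simp: Cset_def)
    with i_in \<open>0 < n\<close> show ?thesis by auto
  qed
  have "\<forall>j\<in>{1..i}. w j \<le> i"
  proof (cases "i = n")
    case True
    show ?thesis
    proof
      fix j assume "j \<in> {1..i}"
      then have "w j \<in> {1..n}" using permutes_in_image[OF w, of j] True by blast
      then show "w j \<le> i" using True by simp
    qed
  next
    case False
    then have "i \<in> Cset n w" using i_in by simp
    then show ?thesis unfolding Cset_permutes_eq[OF w] by simp
  qed
  moreover have "i \<le> n" using i by simp
  ultimately obtain u v where u: "u permutes {1..i}" and v: "v permutes {1..n-i}"
    and wuv: "w = perm_sum i u v"
    using perm_sum_decompose[OF w] by blast
  have "Cset i u \<subseteq> Cset (i + (n-i)) (perm_sum i u v)"
    using Cset_perm_sum[OF u v] by blast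
  then have "Cset i u \<subseteq> Cset n w"
    using i wuv by simp
  moreover have "x < i" if "x \<in> Cset i u" for x
    using that by (auto simp: Cset_def)
  ultimately have "Cset i u = {}"
    using i_min by (meson leD subsetD subsetI empty_iff equalityI)
  with u i have "u \<in> indecomposable_perms i"
    by (simp add: indecomposable_perms_def)
  with i v wuv show ?thesis using that by blast
qed

lemma perm_sum_indecomposable_inject:
  assumes u: "u \<in> indecomposable_perms i" and v: "v permutes {1..n-i}" and "i \<le> n"
    and u': "u' \<in> indecomposable_perms i'" and v': "v' permutes {1..n-i'}" and "i' \<le> n"
    and eq: "perm_sum i u v = perm_sum i' u' v'"
  shows "i = i' \<and> u = u' \<and> v = v'"
proof -
  have "i = Min (insert n (Cset n (perm_sum i u v)))"
    using Min_Cset_perm_sum_indecomposable[OF u v] \<open>i \<le> n\<close> by simp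
  also have "\<dots> = i'"
    using Min_Cset_perm_sum_indecomposable[OF u' v'] \<open>i' \<le> n\<close> eq by simp
  finally have "i = i'" .
  with u u' v v' eq show ?thesis
    using perm_sum_inject[of u i u' v "n-i" v'] by (simp add: indecomposable_perms_def)
qed

lemma bij_betw_perm_sum:
  assumes "0 < n"
  shows "bij_betw (\<lambda>(i, u, v). perm_sum i u v)
    (SIGMA i:{1..n}. indecomposable_perms i \<times> {v. v permutes {1..n-i}}) {w. w permutes {1..n}}"
    (is "bij_betw ?f ?A _")
proof (rule bij_betw_imageI)
  show "inj_on ?f ?A"
    unfolding inj_on_def by (auto dest: perm_sum_indecomposable_inject)
  show "?f ` ?A = {w. w permutes {1..n}}"
  proof (intro equalityI subsetI)
    fix w assume "w \<in> ?f ` ?A"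
    then obtain i u v where "(i, u, v) \<in> ?A" and w: "w = perm_sum i u v"
      by (auto simp: image_iff)
    then have "u permutes {1..i}" "v permutes {1..n-i}" "i \<le> n"
      by (auto simp: indecomposable_perms_def)
    with w show "w \<in> {w. w permutes {1..n}}"
      using permutes_perm_sum[of u i v "n-i"] by simp
  next
    fix w assume "w \<in> {w. w permutes {1..n}}"
    then obtain i u v where "i \<in> {1..n}" "u \<in> indecomposable_perms i" "v permutes {1..n-i}"
      "w = perm_sum i u v"
      using perm_sum_decompose_indecomposable[OF _ assms] by blast
    then show "w \<in> ?f ` ?A"
      by force
  qed
qed

lemma card_perms_Cset:
  assumes "0 < n"
  shows "card {w. w permutes {1..n} \<and> P (card (Cset n w))} =
    (\<Sum>i=1..n. card (indecomposable_perms i) *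
       card {v. v permutes {1..n-i} \<and> P (of_bool (i < n) + card (Cset (n-i) v))})"
proof -
  let ?f = "\<lambda>(i, u, v). perm_sum i u v"
  let ?A = "SIGMA i:{1..n}. indecomposable_perms i \<times> {v. v permutes {1..n-i}}"
  define B where "B i = {v. v permutes {1..n-i} \<and> P (of_bool (i < n) + card (Cset (n-i) v))}" for i
  let ?S = "SIGMA i:{1..n}. indecomposable_perms i \<times> B i"
  have bij: "bij_betw ?f ?A {w. w permutes {1..n}}"
    by (rule bij_betw_perm_sum[OF assms])
  have card_eq: "card (Cset n (perm_sum i u v)) = of_bool (i < n) + card (Cset (n-i) v)"
    if "i \<in> {1..n}" "u \<in> indecomposable_perms i" "v permutes {1..n-i}" for i u v
    using card_Cset_perm_sum_indecomposable[OF that(2,3)] that(1) by simp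
  have "?S = {x \<in> ?A. P (card (Cset n (?f x)))}"
    by (auto simp: B_def card_eq)
  then have "?f ` ?S = {w \<in> ?f ` ?A. P (card (Cset n w))}"
    by (simp only: Compr_image_eq[of ?f ?A "\<lambda>w. P (card (Cset n w))"])
  then have "{w. w permutes {1..n} \<and> P (card (Cset n w))} = ?f ` ?S"
    by (simp only: bij_betw_imp_surj_on[OF bij] mem_Collect_eq)
  also have "card \<dots> = card ?S"
    by (rule card_image, rule inj_on_subset[OF bij_betw_imp_inj_on[OF bij]]) (auto simp: B_def)
  also have "\<dots> = (\<Sum>i=1..n. card (indecomposable_perms i \<times> B i))"
  proof (rule card_SigmaI)
    have "finite (B i)" for i
      by (rule finite_subset[OF _ finite_permutations[of "{1..n-i}"]]) (auto simp: B_def)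
    then show "\<forall>i\<in>{1..n}. finite (indecomposable_perms i \<times> B i)"
      by (simp add: finite_indecomposable_perms)
  qed simp
  finally show ?thesis
    by (simp add: card_cartesian_product B_def)
qed

definition perms_Cset_count :: "nat \<Rightarrow> nat \<Rightarrow> nat" where
  "perms_Cset_count n k = card {w. w permutes {1..n} \<and> card (Cset n w) = k}"

lemma fact_eq_sum_indecomposable_perms:
  assumes "0 < n"
  shows "fact n = (\<Sum>i=1..n. card (indecomposable_perms i) * fact (n - i))"
  using card_perms_Cset[OF assms, of "\<lambda>_. True"] by (simp add: card_permutations)

lemma perms_Cset_count_0:
  assumes "0 < n"
  shows "perms_Cset_count n 0 = card (indecomposable_perms n)"
proof -
  have "{w. w permutes {1..n} \<and> card (Cset n w) = 0} = indecomposable_perms n"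
    using assms by (auto simp: indecomposable_perms_def)
  then show ?thesis
    by (simp add: perms_Cset_count_def)
qed

lemma perms_Cset_count_Suc:
  assumes "0 < n"
  shows "perms_Cset_count n (Suc k) =
    (\<Sum>i\<in>{1..<n}. card (indecomposable_perms i) * perms_Cset_count (n - i) k)"
proof -
  have "perms_Cset_count n (Suc k) = (\<Sum>i=1..n. card (indecomposable_perms i) *
      card {v. v permutes {1..n-i} \<and> of_bool (i < n) + card (Cset (n-i) v) = Suc k})"
    unfolding perms_Cset_count_def by (rule card_perms_Cset[OF assms])
  also have "\<dots> = (\<Sum>i\<in>{1..<n}. card (indecomposable_perms i) *
      card {v. v permutes {1..n-i} \<and> of_bool (i < n) + card (Cset (n-i) v) = Suc k})"
    using assms by (simp add: sum.last_plus Cset_0)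
  also have "\<dots> = (\<Sum>i\<in>{1..<n}. card (indecomposable_perms i) * perms_Cset_count (n - i) k)"
    by (rule sum.cong) (simp_all add: perms_Cset_count_def)
  finally show ?thesis .
qed

definition indecomposable_fps :: "rat fps" where
  "indecomposable_fps = Abs_fps (\<lambda>n. of_nat (card (indecomposable_perms n)))"

lemma indecomposable_fps_nth_0 [simp]: "indecomposable_fps $ 0 = 0"
  by (simp add: indecomposable_fps_def indecomposable_perms_def)

lemma fA_eq_indecomposable_fps: "fA = indecomposable_fps"
proof -
  define F :: "rat fps" where "F = Abs_fps (\<lambda>n. of_nat (fact n))"
  have "indecomposable_fps * F = F - 1"
  proof (rule fps_ext)
    fix n
    show "(indecomposable_fps * F) $ n = (F - 1) $ n"
    proof (cases "n = 0")
      case False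
      have "(indecomposable_fps * F) $ n = (\<Sum>i=0..n. indecomposable_fps $ i * F $ (n - i))"
        by (rule fps_mult_nth)
      also have "\<dots> = (\<Sum>i=1..n. indecomposable_fps $ i * F $ (n - i))"
        by (simp add: sum.atLeast_Suc_atMost)
      also have "\<dots> = of_nat (\<Sum>i=1..n. card (indecomposable_perms i) * fact (n - i))"
        by (simp add: indecomposable_fps_def F_def)
      also have "\<dots> = of_nat (fact n)"
        using False by (simp only: fact_eq_sum_indecomposable_perms[of n] gr0I)
      also have "\<dots> = (F - 1) $ n"
        using False by (simp add: F_def)
      finally show ?thesis .
    qed (simp add: F_def)
  qed
  then have "F * (1 - indecomposable_fps) = 1"
    by (simp add: algebra_simps)
  then have "inverse F = 1 - indecomposable_fps"
    by (rule fps_inverse_unique)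
  then show ?thesis
    by (simp add: fA_def F_def)
qed

lemma indecomposable_fps_power_nth:
  assumes "0 < n"
  shows "(indecomposable_fps ^ Suc k) $ n = of_nat (perms_Cset_count n k)"
  using assms
proof (induction k arbitrary: n)
  case 0
  then show ?case by (simp add: indecomposable_fps_def perms_Cset_count_0)
next
  case (Suc k)
  let ?D = indecomposable_fps and ?E = "indecomposable_fps ^ Suc k"
  have "(?D * ?E) $ n = (\<Sum>i=0..n. ?D $ i * ?E $ (n - i))"
    by (rule fps_mult_nth)
  also have "\<dots> = (\<Sum>i\<in>{1..<n}. ?D $ i * ?E $ (n - i))"
  proof (rule sum.mono_neutral_right)
    show "\<forall>i\<in>{0..n} - {1..<n}. ?D $ i * ?E $ (n - i) = 0"
    proof
      fix i assume "i \<in> {0..n} - {1..<n}"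
      then have "i = 0 \<or> i = n" by auto
      then show "?D $ i * ?E $ (n - i) = 0" by (auto simp: fps_power_zeroth)
    qed
  qed auto
  also have "\<dots> = (\<Sum>i\<in>{1..<n}. of_nat (card (indecomposable_perms i) * perms_Cset_count (n - i) k))"
  proof (rule sum.cong)
    fix i assume i: "i \<in> {1..<n}"
    then have "?E $ (n - i) = of_nat (perms_Cset_count (n - i) k)"
      by (intro Suc.IH) auto
    then show "?D $ i * ?E $ (n - i) = of_nat (card (indecomposable_perms i) * perms_Cset_count (n - i) k)"
      by (simp add: indecomposable_fps_def)
  qed simp
  also have "\<dots> = of_nat (perms_Cset_count n (Suc k))"
    by (simp add: perms_Cset_count_Suc[OF Suc.prems])
  finally show ?case
    by simp
qed

lemma fps_inverse_one_minus_X_mult_const: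
  fixes c :: "'a::field fps"
  shows "inverse (1 - fps_X * fps_const c) = Abs_fps (\<lambda>k. c ^ k)"
proof -
  define f where "f = 1 - fps_X * fps_const c"
  define G where "G = Abs_fps (\<lambda>k. c ^ k)"
  have "f * G = 1"
  proof (rule fps_ext)
    fix n
    have "f * G = G - fps_X * (fps_const c * G)"
      by (simp add: f_def algebra_simps)
    then show "(f * G) $ n = 1 $ n"
      by (cases n) (simp_all add: G_def)
  qed
  \<comment> \<open>the coefficients form a ring rather than a field, so \<open>fps_inverse_unique\<close> does not apply\<close>
  moreover have "G $ 0 * f $ 0 = 1"
    by (simp add: f_def G_def)
  ultimately have "fps_right_inverse f (G $ 0) = G"
    by (rule fps_lr_inverse_unique_ring1(2))
  moreover have "inverse f = fps_right_inverse f (G $ 0)"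
    unfolding fps_inverse_def[of f] by (simp add: f_def G_def)
  ultimately show ?thesis
    by (simp add: f_def G_def)
qed

lemma GA_nth: "GA $ k = fA ^ Suc k"
  by (simp add: GA_def fps_inverse_one_minus_X_mult_const)

theorem mainTheorem14:
  fixes n k :: nat
  assumes "n \<ge> 1"
  shows "of_nat (card {w. w permutes {1..n} \<and> card (Cset n w) = k}) = fps_nth (fps_nth GA k) n"
  using indecomposable_fps_power_nth[of n k] assms
  by (simp add: GA_nth fA_eq_indecomposable_fps perms_Cset_count_def)

end
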